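(* Let $\Gamma_1=(V_1,\nu_1,\mu_1)$ and $\Gamma_2=(V_2,\nu_2,\mu_2)$ be fuzzy graphs and $\Gamma=\Gamma_1\square\Gamma_2$ their Cartesian product. Then $$\sigma^*(\Gamma)=\sigma^*(\Gamma_1)+\sigma^*(\Gamma_2).$$
   Context: A fuzzy graph $\Gamma=(V,\nu,\mu)$ consists of a finite nonempty vertex set $V$, a map $\nu:V\to[0,1]$, and a symmetric map $\mu:V\times V\to[0,1]$ with $\mu(u,v)\le\min(\nu(u),\nu(v))$. The fuzzy degree is $d_\Gamma(v)=\sum_{u\ne v}\mu(v,u)$, the fuzzy size is $\mathrm{ew}(\Gamma)=\frac12\sum_v d_\Gamma(v)$, and with $n=|V|$, $\lambda=2\,\mathrm{ew}(\Gamma)/n$, the fuzzy sigma index is $\sigma^*(\Gamma)=\frac1n\sum_{v}(d_\Gamma(v)-\lambda)^2$. The Cartesian product $\Gamma_1\square\Gamma_2$ is the fuzzy graph on $V_1\times V_2$ whose edge membership is $\mu((u,v),(u,v'))=\mu_2(v,v')$ for $v\ne v'$, $\mu((u,v),(u',v))=\mu_1(u,u')$ for $u\neq u'$, and $0$ for all other pairs of distinct vertices, so that $d_\Gamma(u,v)=d_{\Gamma_1}(u)+d_{\Gamma_2}(v)$. *)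

theory Defs
  imports Complex_Main
begin

text \<open>A fuzzy graph is given by a vertex set V, a vertex membership nu and an
edge membership mu (only values on V are relevant).\<close>

definition fuzzy_graph :: "'a set \<Rightarrow> ('a \<Rightarrow> real) \<Rightarrow> ('a \<Rightarrow> 'a \<Rightarrow> real) \<Rightarrow> bool" where
  "fuzzy_graph V nu mu \<longleftrightarrow> finite V \<and> V \<noteq> {} \<and>
     (\<forall>v\<in>V. 0 \<le> nu v \<and> nu v \<le> 1) \<and>
     (\<forall>u\<in>V. \<forall>v\<in>V. 0 \<le> mu u v \<and> mu u v \<le> 1 \<and> mu u v = mu v u \<and>
                     mu u v \<le> min (nu u) (nu v))"

definition fdeg :: "'a set \<Rightarrow> ('a \<Rightarrow> 'a \<Rightarrow> real) \<Rightarrow> 'a \<Rightarrow> real" where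
  "fdeg V mu v = (\<Sum>u\<in>V - {v}. mu v u)"

definition fsize :: "'a set \<Rightarrow> ('a \<Rightarrow> 'a \<Rightarrow> real) \<Rightarrow> real" where
  "fsize V mu = (\<Sum>v\<in>V. fdeg V mu v) / 2"

definition fsigma :: "'a set \<Rightarrow> ('a \<Rightarrow> 'a \<Rightarrow> real) \<Rightarrow> real" where
  "fsigma V mu = (let n = real (card V); lam = 2 * fsize V mu / n in
                  (\<Sum>v\<in>V. (fdeg V mu v - lam)^2) / n)"

text \<open>Cartesian product. Vertex membership taken as the minimum (standard);
it does not affect the sigma index.\<close>

definition cart_nu :: "('a \<Rightarrow> real) \<Rightarrow> ('b \<Rightarrow> real) \<Rightarrow> ('a \<times> 'b \<Rightarrow> real)" where
  "cart_nu nu1 nu2 = (\<lambda>(u, v). min (nu1 u) (nu2 v))"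

definition cart_mu :: "('a \<Rightarrow> 'a \<Rightarrow> real) \<Rightarrow> ('b \<Rightarrow> 'b \<Rightarrow> real) \<Rightarrow>
    ('a \<times> 'b \<Rightarrow> 'a \<times> 'b \<Rightarrow> real)" where
  "cart_mu mu1 mu2 = (\<lambda>(u, v) (u', v').
     if u = u' \<and> v \<noteq> v' then mu2 v v'
     else if v = v' \<and> u \<noteq> u' then mu1 u u'
     else 0)"

end

theory Submission
  imports Defs
begin

text \<open>The degree of \<open>(u, v)\<close> in the product is \<open>d\<^sub>1(u) + d\<^sub>2(v)\<close>, and the sigma index is
  the population variance of the degree function.  Under the uniform distribution on
  \<open>V\<^sub>1 \<times> V\<^sub>2\<close> the two summands are independent, so their variances add: the cross term is
  the product of the two sums of deviations from the mean, each of which vanishes.\<close>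

definition mean :: "'c set \<Rightarrow> ('c \<Rightarrow> real) \<Rightarrow> real" where
  "mean A f = (\<Sum>x\<in>A. f x) / card A"

definition pop_variance :: "'c set \<Rightarrow> ('c \<Rightarrow> real) \<Rightarrow> real" where
  "pop_variance A f = (\<Sum>x\<in>A. (f x - mean A f)^2) / card A"

lemma fsigma_eq_pop_variance: "fsigma V mu = pop_variance V (fdeg V mu)"
  unfolding fsigma_def pop_variance_def mean_def fsize_def Let_def by simp

lemma pop_variance_cong:
  assumes "\<And>x. x \<in> A \<Longrightarrow> f x = g x"
  shows "pop_variance A f = pop_variance A g"
  using assms unfolding pop_variance_def mean_def by (simp cong: sum.cong)

lemma sum_diff_mean_eq_0:
  assumes "finite A" "A \<noteq> {}"
  shows "(\<Sum>x\<in>A. f x - mean A f) = 0"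
  using assms by (simp add: mean_def sum_subtractf)

lemma mean_sum_product:
  assumes "finite A" "A \<noteq> {}" "finite B" "B \<noteq> {}"
  shows "mean (A \<times> B) (\<lambda>(x, y). f x + g y) = mean A f + mean B g"
proof -
  have "(\<Sum>(x, y)\<in>A \<times> B. f x + g y) = card B * sum f A + card A * sum g B"
    by (simp add: sum.cartesian_product[symmetric] sum.distrib sum.swap[of _ A B]
        sum_distrib_right mult.commute)
  then show ?thesis
    using assms by (simp add: mean_def card_cartesian_product field_simps)
qed

lemma sum_square_sum_product:
  fixes f :: "'a \<Rightarrow> real" and g :: "'b \<Rightarrow> real"
  shows "(\<Sum>(x, y)\<in>A \<times> B. (f x + g y)^2)
    = card B * (\<Sum>x\<in>A. (f x)^2) + card A * (\<Sum>y\<in>B. (g y)^2) + 2 * sum f A * sum g B"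
  by (simp add: sum.cartesian_product[symmetric] power2_sum sum.distrib sum_distrib_left
      sum_distrib_right mult.commute mult.left_commute)

lemma pop_variance_sum_product:
  assumes A: "finite A" "A \<noteq> {}" and B: "finite B" "B \<noteq> {}"
  shows "pop_variance (A \<times> B) (\<lambda>(x, y). f x + g y) = pop_variance A f + pop_variance B g"
proof -
  define f' where "f' x = f x - mean A f" for x
  define g' where "g' y = g y - mean B g" for y
  have "(\<Sum>(x, y)\<in>A \<times> B. (f x + g y - mean (A \<times> B) (\<lambda>(x, y). f x + g y))^2)
      = (\<Sum>(x, y)\<in>A \<times> B. (f' x + g' y)^2)"
    unfolding mean_sum_product[OF A B] f'_def g'_def by (simp add: algebra_simps)
  also have "\<dots> = card B * (\<Sum>x\<in>A. (f' x)^2) + card A * (\<Sum>y\<in>B. (g' y)^2)"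
    using sum_diff_mean_eq_0[OF A, of f] sum_diff_mean_eq_0[OF B, of g]
    by (simp add: sum_square_sum_product f'_def g'_def)
  finally show ?thesis
    using A B unfolding pop_variance_def f'_def g'_def
    by (simp add: card_cartesian_product split_def field_simps)
qed

lemma fdeg_eq_sum_off_diagonal:
  assumes "finite V"
  shows "fdeg V mu v = (\<Sum>u\<in>V. if u = v then 0 else mu v u)"
  using assms by (simp add: fdeg_def sum.If_cases Diff_eq)

lemma sum_cross:
  fixes F :: "'b \<Rightarrow> 'c::comm_monoid_add"
  assumes "finite A" "finite B" "a \<in> A" "b \<in> B"
  shows "(\<Sum>(x, y)\<in>A \<times> B. (if x = a then F y else 0) + (if y = b then G x else 0))
    = sum F B + sum G A"
  using assms
  by (simp add: sum.cartesian_product[symmetric] sum.distrib sum.delta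
      sum.swap[of "\<lambda>x y. if x = a then F y else 0" B A])

lemma cart_mu_off_diagonal:
  "(if (x, y) = (u, v) then 0 else cart_mu mu1 mu2 (u, v) (x, y))
    = (if x = u then (if y = v then 0 else mu2 v y) else 0)
      + (if y = v then (if x = u then 0 else mu1 u x) else 0)"
  by (auto simp: cart_mu_def)

lemma fdeg_cart_mu:
  assumes "finite V1" "finite V2" "u \<in> V1" "v \<in> V2"
  shows "fdeg (V1 \<times> V2) (cart_mu mu1 mu2) (u, v) = fdeg V1 mu1 u + fdeg V2 mu2 v"
proof -
  have "fdeg (V1 \<times> V2) (cart_mu mu1 mu2) (u, v)
      = (\<Sum>(x, y)\<in>V1 \<times> V2. if (x, y) = (u, v) then 0 else cart_mu mu1 mu2 (u, v) (x, y))"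
    using assms by (auto simp: fdeg_eq_sum_off_diagonal intro!: sum.cong)
  also have "\<dots> = (\<Sum>y\<in>V2. if y = v then 0 else mu2 v y) + (\<Sum>x\<in>V1. if x = u then 0 else mu1 u x)"
    unfolding cart_mu_off_diagonal using assms by (rule sum_cross)
  finally show ?thesis
    using assms by (simp add: fdeg_eq_sum_off_diagonal)
qed

theorem theorem2p6:
  fixes V1 :: "'a set" and nu1 :: "'a \<Rightarrow> real" and mu1 :: "'a \<Rightarrow> 'a \<Rightarrow> real"
    and V2 :: "'b set" and nu2 :: "'b \<Rightarrow> real" and mu2 :: "'b \<Rightarrow> 'b \<Rightarrow> real"
  assumes "fuzzy_graph V1 nu1 mu1" and "fuzzy_graph V2 nu2 mu2"
  shows "fsigma (V1 \<times> V2) (cart_mu mu1 mu2) = fsigma V1 mu1 + fsigma V2 mu2"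
proof -
  have V1: "finite V1" "V1 \<noteq> {}" and V2: "finite V2" "V2 \<noteq> {}"
    using assms unfolding fuzzy_graph_def by auto
  have "pop_variance (V1 \<times> V2) (fdeg (V1 \<times> V2) (cart_mu mu1 mu2))
      = pop_variance (V1 \<times> V2) (\<lambda>(u, v). fdeg V1 mu1 u + fdeg V2 mu2 v)"
    by (rule pop_variance_cong) (auto simp: fdeg_cart_mu V1 V2)
  then show ?thesis
    by (simp add: fsigma_eq_pop_variance pop_variance_sum_product V1 V2)
qed

end
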